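(* Let $G$ be a normed group with a separately continuous and transitive Nikodym action on a non-meagre metric space $X$. Then for every $x\in X$ and every closed nowhere dense $F\subseteq X$, the set $W_{x,F}=\{\alpha\in G:\alpha(x)\notin F\}$ is dense and open in $G$. In particular, $G$ separates points from nowhere dense closed sets.
   Context: A normed group is a group with a group-norm $\|\cdot\|$ (subadditive, $\|t\|>0$ for $t\ne e_G$, $\|e_G\|=0$, $\|t^{-1}\|=\|t\|$), topologized by $d_R(s,t)=\|st^{-1}\|$. A separately continuous action $\varphi:G\times X\to X$ ($\varphi(e_G,x)=x$, $\varphi(gh,x)=\varphi(g,\varphi(h,x))$, write $g(x)=\varphi(g,x)$) has $x\mapsto g(x)$ continuous for each $g$ and $\varphi_x:g\mapsto g(x)$ continuous for each $x$; transitive means for all $x,y$ some $g$ has $g(x)=y$. Nikodym action: for every non-empty open neighbourhood $U$ of $e_G$ and every $x$, $Ux=\{u(x):u\in U\}$ contains a non-meagre set with the Baire property. *)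

theory Defs
  imports "HOL-Analysis.Analysis"
begin

text \<open>A group-norm on a (not necessarily abelian) group written additively
  via the type class group_add: identity 0, inverse uminus, s - t = s + (-t).\<close>
definition group_norm :: "('g::group_add \<Rightarrow> real) \<Rightarrow> bool" where
  "group_norm N \<longleftrightarrow> N 0 = 0 \<and> (\<forall>t. t \<noteq> 0 \<longrightarrow> N t > 0)
     \<and> (\<forall>s t. N (s + t) \<le> N s + N t) \<and> (\<forall>t. N (- t) = N t)"

definition dR :: "('g::group_add \<Rightarrow> real) \<Rightarrow> 'g \<Rightarrow> 'g \<Rightarrow> real" where
  "dR N s t = N (s - t)"

definition gtop :: "('g::group_add \<Rightarrow> real) \<Rightarrow> 'g topology" where
  "gtop N = Metric_space.mtopology UNIV (dR N)"

definition nowhere_dense :: "'x::topological_space set \<Rightarrow> bool" where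
  "nowhere_dense A \<longleftrightarrow> interior (closure A) = {}"

definition meagre :: "'x::topological_space set \<Rightarrow> bool" where
  "meagre A \<longleftrightarrow> (\<exists>\<F>. countable \<F> \<and> (\<forall>B\<in>\<F>. nowhere_dense B) \<and> A \<subseteq> \<Union>\<F>)"

definition baire_property :: "'x::topological_space set \<Rightarrow> bool" where
  "baire_property A \<longleftrightarrow> (\<exists>U M. open U \<and> meagre M \<and> A = (U - M) \<union> (M - U))"

definition group_action :: "('g::group_add \<Rightarrow> 'x \<Rightarrow> 'x) \<Rightarrow> bool" where
  "group_action \<phi> \<longleftrightarrow> (\<forall>x. \<phi> 0 x = x) \<and> (\<forall>g h x. \<phi> (g + h) x = \<phi> g (\<phi> h x))"

definition sep_continuous_action ::
  "('g::group_add \<Rightarrow> real) \<Rightarrow> ('g \<Rightarrow> 'x::topological_space \<Rightarrow> 'x) \<Rightarrow> bool" where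
  "sep_continuous_action N \<phi> \<longleftrightarrow> group_action \<phi>
     \<and> (\<forall>g. continuous_on UNIV (\<phi> g))
     \<and> (\<forall>x. continuous_map (gtop N) euclidean (\<lambda>g. \<phi> g x))"

definition transitive_action :: "('g \<Rightarrow> 'x \<Rightarrow> 'x) \<Rightarrow> bool" where
  "transitive_action \<phi> \<longleftrightarrow> (\<forall>x y. \<exists>g. \<phi> g x = y)"

definition nikodym_action ::
  "('g::group_add \<Rightarrow> real) \<Rightarrow> ('g \<Rightarrow> 'x::topological_space \<Rightarrow> 'x) \<Rightarrow> bool" where
  "nikodym_action N \<phi> \<longleftrightarrow> (\<forall>U x. openin (gtop N) U \<and> 0 \<in> U \<longrightarrow>
     (\<exists>A. A \<subseteq> (\<lambda>u. \<phi> u x) ` U \<and> \<not> meagre A \<and> baire_property A))"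

end

theory Submission
  imports Defs
begin

text \<open>If \<open>\<alpha>(x) \<in> F\<close> for all \<open>\<alpha>\<close> in a ball \<open>B(\<beta>, r)\<close>, then the set \<open>U(\<beta>(x))\<close> with
  \<open>U = B(0, r)\<close> lies in \<open>F\<close>, since \<open>U \<beta> \<subseteq> B(\<beta>, r)\<close> by right invariance of \<open>d\<^sub>R\<close>.
  But a nowhere dense set contains only meagre sets, whereas by the Nikodym property
  \<open>U(\<beta>(x))\<close> contains a non-meagre set. Hence \<open>W\<^sub>x\<^sub>,\<^sub>F\<close> meets every ball; it is open
  because \<open>\<alpha> \<mapsto> \<alpha>(x)\<close> is continuous and \<open>F\<close> is closed.\<close>

lemma Metric_space_dR:
  assumes "group_norm (N::'g::group_add \<Rightarrow> real)"
  shows "Metric_space UNIV (dR N)"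
proof
  have N0: "N 0 = 0" and pos: "\<And>t. t \<noteq> 0 \<Longrightarrow> N t > 0"
    and sub: "\<And>s t. N (s + t) \<le> N s + N t" and sym: "\<And>t. N (- t) = N t"
    using assms unfolding group_norm_def by auto
  fix x y z :: 'g
  show "0 \<le> dR N x y" unfolding dR_def
    using pos[of "x - y"] N0 by (cases "x - y = 0") auto
  show "dR N x y = dR N y x" unfolding dR_def using sym[of "x - y"] by simp
  show "dR N x y = 0 \<longleftrightarrow> x = y" unfolding dR_def using pos[of "x - y"] N0
    by (cases "x - y = 0") auto
  have "x - z = (x - y) + (y - z)"
    unfolding diff_conv_add_uminus add.assoc by (simp only: minus_add_cancel)
  then show "dR N x z \<le> dR N x y + dR N y z"
    unfolding dR_def using sub[of "x - y" "y - z"] by simp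
qed

lemma dR_right_translate:
  assumes "group_norm N"
  shows "dR N \<beta> (u + \<beta>) = dR N 0 u"
proof -
  have "\<beta> - (u + \<beta>) = - u"
    unfolding diff_conv_add_uminus minus_add by (rule add_minus_cancel)
  then show ?thesis
    using assms by (simp add: dR_def group_norm_def)
qed

lemma nowhere_dense_imp_meagre_subset:
  assumes "nowhere_dense F" "A \<subseteq> F"
  shows "meagre A"
  unfolding meagre_def using assms by (intro exI[of _ "{F}"]) auto

lemma nikodym_orbit_not_subset_nowhere_dense:
  assumes "nikodym_action N \<phi>" "openin (gtop N) U" "0 \<in> U" "nowhere_dense F"
  shows "\<not> (\<lambda>u. \<phi> u y) ` U \<subseteq> F"
proof
  assume orbit_in_F: "(\<lambda>u. \<phi> u y) ` U \<subseteq> F"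
  obtain A where "A \<subseteq> (\<lambda>u. \<phi> u y) ` U" "\<not> meagre A"
    using assms(1-3) unfolding nikodym_action_def by blast
  moreover from this(1) orbit_in_F have "meagre A"
    by (intro nowhere_dense_imp_meagre_subset[OF assms(4)]) (rule subset_trans)
  ultimately show False by simp
qed

lemma openin_orbit_preimage_compl:
  assumes "group_norm N" "sep_continuous_action N \<phi>" "closed F"
  shows "openin (gtop N) {\<alpha>. \<phi> \<alpha> x \<notin> F}"
proof -
  interpret M: Metric_space UNIV "dR N" using Metric_space_dR[OF assms(1)] .
  have "continuous_map (gtop N) euclidean (\<lambda>\<alpha>. \<phi> \<alpha> x)"
    using assms(2) unfolding sep_continuous_action_def by auto
  from openin_continuous_map_preimage[OF this, of "- F"] assms(3)
  show ?thesis by (simp add: gtop_def closed_def)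
qed

lemma dense_orbit_preimage_compl:
  assumes "group_norm N" "sep_continuous_action N \<phi>" "nikodym_action N \<phi>"
    and "nowhere_dense F"
  shows "(gtop N) closure_of {\<alpha>. \<phi> \<alpha> x \<notin> F} = UNIV"
proof -
  interpret M: Metric_space UNIV "dR N" using Metric_space_dR[OF assms(1)] .
  have act: "\<And>g h y. \<phi> (g + h) y = \<phi> g (\<phi> h y)"
    using assms(2) unfolding sep_continuous_action_def group_action_def by auto
  have "\<exists>\<alpha>. \<phi> \<alpha> x \<notin> F \<and> \<alpha> \<in> T" if \<beta>: "\<beta> \<in> T" and T: "openin M.mtopology T" for \<beta> T
  proof (rule ccontr)
    assume T_in_F: "\<not> (\<exists>\<alpha>. \<phi> \<alpha> x \<notin> F \<and> \<alpha> \<in> T)"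
    obtain r where "r > 0" and ball_in_T: "M.mball \<beta> r \<subseteq> T"
      using \<beta> T M.openin_mtopology by meson
    have "(\<lambda>u. \<phi> u (\<phi> \<beta> x)) ` M.mball 0 r \<subseteq> F"
    proof clarify
      fix u assume "u \<in> M.mball 0 r"
      then have "u + \<beta> \<in> T"
        using ball_in_T dR_right_translate[OF assms(1), of \<beta> u] by auto
      then have "\<phi> (u + \<beta>) x \<in> F" using T_in_F by blast
      then show "\<phi> u (\<phi> \<beta> x) \<in> F" by (simp add: act)
    qed
    moreover have "openin (gtop N) (M.mball 0 r)" "0 \<in> M.mball 0 r"
      using \<open>r > 0\<close> by (auto simp: gtop_def)
    ultimately show False
      using nikodym_orbit_not_subset_nowhere_dense[OF assms(3) _ _ assms(4)] by metis
  qed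
  then show ?thesis
    unfolding gtop_def by (auto simp: in_closure_of)
qed

theorem mainTheorem10:
  fixes N :: "'g::group_add \<Rightarrow> real"
    and \<phi> :: "'g \<Rightarrow> 'x::metric_space \<Rightarrow> 'x"
  assumes "group_norm N"
    and "sep_continuous_action N \<phi>"
    and "transitive_action \<phi>"
    and "nikodym_action N \<phi>"
    and "\<not> meagre (UNIV :: 'x set)"
  shows "\<forall>x F. closed F \<and> nowhere_dense F \<longrightarrow>
           openin (gtop N) {\<alpha>. \<phi> \<alpha> x \<notin> F}
         \<and> (gtop N) closure_of {\<alpha>. \<phi> \<alpha> x \<notin> F} = UNIV
         \<and> (\<exists>\<alpha>. \<phi> \<alpha> x \<notin> F)"
proof (intro allI impI conjI)
  fix x and F :: "'x set"
  assume F: "closed F \<and> nowhere_dense F"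
  then show "openin (gtop N) {\<alpha>. \<phi> \<alpha> x \<notin> F}"
    using openin_orbit_preimage_compl[OF assms(1,2)] by blast
  show "(gtop N) closure_of {\<alpha>. \<phi> \<alpha> x \<notin> F} = UNIV"
    using dense_orbit_preimage_compl[OF assms(1,2,4)] F by blast
  have "F \<noteq> UNIV" using F unfolding nowhere_dense_def by auto
  then obtain y where "y \<notin> F" by auto
  moreover obtain \<alpha> where "\<phi> \<alpha> x = y"
    using assms(3) unfolding transitive_action_def by blast
  ultimately show "\<exists>\<alpha>. \<phi> \<alpha> x \<notin> F" by blast
qed

end
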